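(* Let $q$ be odd, $\alpha,\beta\in\mathbb{F}_{q^2}$ with $\alpha\ne0$ and $(\beta^q-\beta)^2+4\alpha^{q+1}$ a nonsquare in $\mathbb{F}_q$, let $w=\epsilon^2$, $R_2=(0,w\epsilon,1)$ and $U_\infty=(1,0,0)$. (1) If $\alpha$ is a nonsquare in $\mathbb{F}_{q^2}$, then $\mathrm{pedal}(R_2)$ is an arc. (2) If $\alpha$ is a nonzero square in $\mathbb{F}_{q^2}$, then $\mathrm{pedal}(R_2)$ is a set of class $(0,1,2,4)$. Further, there exist at least $\frac{q-3}{4}$ lines meeting $\mathrm{pedal}(R_2)$ in exactly $4$ points, and every such line passes through $U_\infty$.
   Context: Points of $\mathrm{PG}(2,q^2)$ have homogeneous coordinates $(x,y,z)$. $\zeta$ is a primitive element of $\mathbb{F}_{q^2}$ and $\epsilon=\zeta^{(q+1)/2}$. $\mathcal U_{\alpha\beta}=\{(x,\alpha x^2+\beta x^{q+1}+r,1): x\in\mathbb{F}_{q^2}, r\in\mathbb{F}_q\}\cup\{(0,1,0)\}$, which under the hypotheses is a unital (a set of $q^3+1$ points meeting every line in $1$ or $q+1$ points), and $R_2\notin\mathcal U_{\alpha\beta}$. For a point $P$ not on the unital, $\mathrm{pedal}(P)$ is the set of points of contact of the $q+1$ tangent lines through $P$. A set is of class $(a_1,\dots,a_k)$ if every line meets it in some $a_i$ points and each $a_i$ occurs for some line. An arc is a set meeting every line in at most $2$ points. *)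

theory Defs
  imports Complex_Main
begin

(* Homogeneous coordinates: nonzero triples over a field 'a. *)
type_synonym 'a vec3 = "'a \<times> 'a \<times> 'a"

definition pt :: "'a::field vec3 \<Rightarrow> 'a vec3 set" where
  "pt v = {(c * fst v, c * fst (snd v), c * snd (snd v)) | c. c \<noteq> 0}"

definition PG2 :: "'a::field vec3 set set" where
  "PG2 = {pt v | v. v \<noteq> (0, 0, 0)}"

definition dot3 :: "'a::field vec3 \<Rightarrow> 'a vec3 \<Rightarrow> 'a" where
  "dot3 l v = fst l * fst v + fst (snd l) * fst (snd v) + snd (snd l) * snd (snd v)"

definition line :: "'a::field vec3 \<Rightarrow> 'a vec3 set set" where
  "line l = {pt v | v. v \<noteq> (0, 0, 0) \<and> dot3 l v = 0}"

definition lines :: "'a::field vec3 set set set" where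
  "lines = {line l | l. l \<noteq> (0, 0, 0)}"

definition subfield_q :: "nat \<Rightarrow> 'a::field set" where
  "subfield_q q = {r. r ^ q = r}"

definition unital_ab :: "nat \<Rightarrow> 'a::field \<Rightarrow> 'a \<Rightarrow> 'a vec3 set set" where
  "unital_ab q \<alpha> \<beta> =
     {pt (x, \<alpha> * x ^ 2 + \<beta> * x ^ (q + 1) + r, 1) | x r. r \<in> subfield_q q}
     \<union> {pt (0, 1, 0)}"

definition pedal :: "'a::field vec3 set set \<Rightarrow> 'a vec3 set \<Rightarrow> 'a vec3 set set" where
  "pedal U P = {Q. \<exists>l \<in> lines. P \<in> l \<and> l \<inter> U = {Q}}"

definition is_arc :: "'a::field vec3 set set \<Rightarrow> bool" where
  "is_arc S \<longleftrightarrow> (\<forall>l \<in> lines. card (l \<inter> S) \<le> 2)"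

definition of_class :: "'a::field vec3 set set \<Rightarrow> nat set \<Rightarrow> bool" where
  "of_class S A \<longleftrightarrow> (\<lambda>l. card (l \<inter> S)) ` lines = A"

definition primitive_elem :: "'a::field \<Rightarrow> bool" where
  "primitive_elem z \<longleftrightarrow> (\<forall>x. x \<noteq> 0 \<longrightarrow> (\<exists>k::nat. x = z ^ k))"

end

theory Submission
  imports
    Defs
    "HOL-Number_Theory.Residues"
    "HOL-Algebra.Sylow"
    "HOL-Computational_Algebra.Primes"
    "HOL-Computational_Algebra.Polynomial"
begin

text \<open>
  Write \<open>frob x = x\<^sup>q\<close>, \<open>Norm\<close> and \<open>Tr\<close> for norm and trace of \<open>\<bbbF>\<^bsub>q\<^sup>2\<^esub> / \<bbbF>\<^sub>q\<close>,
  \<open>g x = \<alpha> x\<^sup>2 + \<beta> x\<^bsup>q+1\<^esub>\<close> and \<open>c = w \<epsilon>\<close>, so that the affine points of the unital are the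
  \<open>(x, y)\<close> with \<open>y - g x \<in> \<bbbF>\<^sub>q\<close> and \<open>R\<^sub>2 = (0, c, 1)\<close>. Then \<open>qf x = g x - frob (g x)\<close> is a
  quadratic form on the plane \<open>\<bbbF>\<^bsub>q\<^sup>2\<^esub> \<cong> \<bbbF>\<^sub>q\<^sup>2\<close>, anisotropic because its discriminant
  \<open>(\<beta>\<^sup>q - \<beta>)\<^sup>2 + 4 \<alpha>\<^bsup>q+1\<^esub>\<close> is a nonsquare in \<open>\<bbbF>\<^sub>q\<close>. The vertical line through \<open>R\<^sub>2\<close>
  meets the unital twice, and the line \<open>y = m x + c\<close> meets it in the \<open>x\<close> with
  \<open>qf (x - u) = qf u + 2c\<close>, where \<open>u\<close> is determined by \<open>m\<close>. This is a single point iff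
  \<open>qf u = -2c\<close>, so the pedal consists of the \<open>q + 1\<close> points \<open>(u, Tr (\<alpha> u\<^sup>2) - c)\<close> with
  \<open>qf u = -2c\<close>.

  The pedal points on a line that is not horizontal lie on an \<open>\<bbbF>\<^sub>q\<close>-line of the plane,
  which meets the conic \<open>qf = -2c\<close> at most twice. The horizontal line \<open>y = t - c\<close> carries the
  points with \<open>Tr (\<alpha> x\<^sup>2) = t\<close>, whose norms are roots of a quadratic over \<open>\<bbbF>\<^sub>q\<close>.
  Raising to the power \<open>(q + 1) / 2\<close>, which turns squares into norms and the nonsquare
  discriminant into its negative, shows that both roots occur only if \<open>\<alpha>\<close> is a square, and
  that then such a line carries 0, 2 or 4 points, and 2 for at most two values of \<open>t\<close>.
  Distributing the \<open>q + 1\<close> pedal points over the \<open>q\<close> horizontal lines, all of which pass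
  through \<open>U\<^sub>\<infinity>\<close>, leaves at least \<open>(q - 3) / 4\<close> lines with four points.
\<close>

section \<open>Finite fields\<close>

lemma field_power_card_minus_one:
  fixes x :: "'a::{field,finite}"
  assumes "x \<noteq> 0"
  shows "x ^ (card (UNIV::'a set) - 1) = 1"
proof -
  have "(\<Prod>y\<in>UNIV-{0}. x * y) = x ^ card (UNIV - {0::'a}) * \<Prod>(UNIV-{0::'a})"
    by (simp add: prod.distrib)
  moreover have "(\<Prod>y\<in>UNIV-{0}. x * y) = (\<Prod>y\<in>UNIV-{0::'a}. y)"
    by (rule prod.reindex_bij_witness[of _ "\<lambda>y. y / x" "\<lambda>y. x * y"]) (use assms in auto)
  ultimately show ?thesis by (simp add: card_Diff_singleton)
qed

lemma card_fixed_power_le: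
  fixes q :: nat
  assumes "q \<ge> 2"
  shows "card {x::'a::field. x ^ q = x} \<le> q"
proof -
  have "{x::'a. x ^ q = x} = {x. poly ([:0, -1:] + monom 1 q) x = 0}"
    by (auto simp: poly_monom)
  moreover have "degree ([:0, -1:] + monom (1::'a) q) = q"
    using assms by (subst degree_add_eq_right) (simp_all add: degree_monom_eq)
  ultimately show ?thesis
    using card_poly_roots_bound[of "[:0, -1:] + monom (1::'a) q"] assms by fastforce
qed

text \<open>A subgroup of order \<open>r\<close> of the additive group (Sylow) contains some \<open>h \<noteq> 0\<close>
  with \<open>r h = 0\<close>.\<close>

lemma prime_dvd_card_field_eq_CHAR:
  fixes r :: nat
  assumes r: "prime r" "r dvd card (UNIV::'a::{field,finite} set)"
  shows "r = CHAR('a)"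
proof -
  define G where "G = \<lparr> carrier = (UNIV :: 'a set), monoid.mult = (+), one = (0 :: 'a) \<rparr>"
  interpret group G
  proof (rule groupI)
    fix x assume x: "x \<in> carrier G"
    show "\<exists>y\<in>carrier G. y \<otimes>\<^bsub>G\<^esub> x = \<one>\<^bsub>G\<^esub>"
      by (intro bexI[of _ "-x"]) (auto simp: G_def)
  qed (auto simp: G_def add_ac)
  have "Coset.order G = r ^ 1 * (card (UNIV::'a set) div r)"
    using r by (simp add: Coset.order_def G_def)
  from sylow_thm[OF r(1) is_group this] obtain H where H: "subgroup H G" "card H = r"
    by auto
  then have "\<not> H \<subseteq> {0}"
    using prime_ge_2_nat[OF r(1)] card_mono[of "{0::'a}" H] by auto
  then obtain h where h: "h \<in> H" "h \<noteq> 0" by blast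
  interpret HG: group "G\<lparr>carrier := H\<rparr>"
    using subgroup.subgroup_is_group[OF H(1) is_group] .
  have power: "x [^]\<^bsub>G\<lparr>carrier := H\<rparr>\<^esub> n = of_nat n * x" for x n
    by (induction n) (simp_all add: G_def algebra_simps)
  have "h [^]\<^bsub>G\<lparr>carrier := H\<rparr>\<^esub> Coset.order (G\<lparr>carrier := H\<rparr>) = \<one>\<^bsub>G\<lparr>carrier := H\<rparr>\<^esub>"
    using HG.pow_order_eq_1 h by simp
  then have "of_nat r * h = 0"
    unfolding power using H by (simp add: Coset.order_def G_def)
  then have "CHAR('a) dvd r"
    using h by (simp add: of_nat_eq_0_iff_char_dvd)
  then show ?thesis
    using r(1) prime_CHAR_semidom[OF finite_imp_CHAR_pos[OF finite_UNIV]]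
    by (metis primes_dvd_imp_eq)
qed

lemma dvd_card_field_eq_CHAR_power:
  assumes "n dvd card (UNIV::'a::{field,finite} set)"
  shows "\<exists>e. n = CHAR('a) ^ e"
proof -
  have "n > 0" using assms by (auto intro: Nat.gr0I)
  moreover have "prime_factors n \<subseteq> {CHAR('a)}"
    using assms prime_dvd_card_field_eq_CHAR[where 'a='a]
    by (auto dest: dvd_trans[OF in_prime_factors_imp_dvd] simp: in_prime_factors_imp_prime)
  ultimately show ?thesis
    by (metis prod_mset_replicate_mset set_mset_subset_singletonD prod_mset_prime_factorization_nat)
qed

lemma power_add_dvd_card_field:
  fixes x y :: "'a::{field,finite}"
  assumes "n dvd card (UNIV::'a set)"
  shows "(x + y) ^ n = x ^ n + y ^ n"
proof -
  obtain e where "n = CHAR('a) ^ e"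
    using dvd_card_field_eq_CHAR_power[OF assms] by blast
  then show ?thesis
    using freshmans_dream' prime_CHAR_semidom finite_imp_CHAR_pos[OF finite_UNIV] by blast
qed

lemma card_square_roots_le: "card {x::'a::idom. x ^ 2 = a} \<le> 2"
proof (cases "\<exists>r. r ^ 2 = a")
  case True
  then obtain r where "r ^ 2 = a" by blast
  then have "{x. x ^ 2 = a} \<subseteq> {r, - r}"
    by (auto simp: power2_eq_iff)
  then have "card {x. x ^ 2 = a} \<le> card {r, - r}"
    by (rule card_mono[rotated]) simp
  also have "\<dots> \<le> 2"
    by (simp add: card_insert_if)
  finally show ?thesis .
qed simp

lemma image_eq_singleton_inj:
  assumes "f ` S = {P}" "inj_on f S"
  obtains x0 where "S = {x0}" "P = f x0"
proof -
  have "P \<in> f ` S" using assms(1) by (metis insertI1)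
  then obtain x0 where x0: "P = f x0" "x0 \<in> S" by (rule imageE)
  have "x = x0" if "x \<in> S" for x
    using assms that x0 by (metis image_eqI inj_onD singletonD)
  then show ?thesis using that x0 by blast
qed

lemma primitive_elem_neq_0:
  fixes z :: "'a::{field,finite}"
  assumes "primitive_elem z" "card (UNIV::'a set) > 2"
  shows "z \<noteq> 0"
proof
  assume "z = 0"
  then have "UNIV \<subseteq> {0::'a, 1}"
    using assms(1) unfolding primitive_elem_def by (metis insertCI power_0_left subsetI)
  then show False
    using card_mono[of "{0::'a, 1}" UNIV] assms(2) by simp
qed

lemma power_mod_if_power_eq_1:
  fixes z :: "'a::monoid_mult"
  assumes "z ^ m = 1"
  shows "z ^ j = z ^ (j mod m)"
proof -
  have "z ^ j = z ^ (m * (j div m) + j mod m)" by simp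
  also have "\<dots> = (z ^ m) ^ (j div m) * z ^ (j mod m)"
    by (simp only: power_add power_mult)
  finally show ?thesis using assms by simp
qed

lemma primitive_elem_power_eq_1_iff:
  fixes z :: "'a::{field,finite}"
  assumes z: "primitive_elem z" "z \<noteq> 0"
  shows "z ^ k = 1 \<longleftrightarrow> (card (UNIV::'a set) - 1) dvd k"
proof -
  define n where "n = card (UNIV::'a set) - 1"
  have "z ^ n = 1"
    using field_power_card_minus_one[OF z(2)] by (simp add: n_def)
  have "card {0::'a, 1} \<le> card (UNIV::'a set)"
    by (rule card_mono) auto
  then have "n > 0" by (simp add: n_def)
  have "n dvd k" if "z ^ k = 1"
  proof (rule ccontr)
    define r where "r = k mod n"
    assume "\<not> n dvd k"
    then have "r > 0" by (metis r_def gr0I mod_eq_0_iff_dvd)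
    have "z ^ r = 1"
      using power_mod_if_power_eq_1[OF \<open>z ^ n = 1\<close>, of k] that by (simp add: r_def)
    have "x \<in> (\<lambda>j. z ^ j) ` {..<r}" if x: "x \<in> UNIV - {0}" for x
    proof -
      obtain j where "x = z ^ j" using z(1) x unfolding primitive_elem_def by blast
      then have "x = z ^ (j mod r)"
        using power_mod_if_power_eq_1[OF \<open>z ^ r = 1\<close>] by simp
      then show ?thesis using \<open>r > 0\<close> by simp
    qed
    then have "card (UNIV - {0::'a}) \<le> card ((\<lambda>j. z ^ j) ` {..<r})"
      by (intro card_mono) auto
    also have "\<dots> \<le> r" using card_image_le[of "{..<r}" "\<lambda>j. z ^ j"] by simp
    finally have "n \<le> r" by (simp add: card_Diff_singleton n_def)
    moreover have "r < n" using \<open>n > 0\<close> by (simp add: r_def)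
    ultimately show False by simp
  qed
  then show ?thesis
    using \<open>z ^ n = 1\<close> by (auto simp: n_def power_mult elim!: dvdE)
qed

section \<open>Points and lines of the projective plane\<close>

lemma pt_self: "v \<in> pt v"
  unfolding pt_def by (rule CollectI, rule exI[of _ 1]) simp

lemma pt_eq_imp_scalar:
  assumes "pt u = pt v"
  shows "\<exists>k. k \<noteq> 0 \<and> v = (k * fst u, k * fst (snd u), k * snd (snd u))"
proof -
  have "v \<in> pt u" using assms pt_self by metis
  then show ?thesis unfolding pt_def by blast
qed

lemma pt_affine_eq_iff: "pt (x, y, 1) = pt (x', y', (1::'a::field)) \<longleftrightarrow> x = x' \<and> y = y'"
  using pt_eq_imp_scalar[of "(x, y, 1)" "(x', y', 1)"] by auto

lemma pt_affine_neq_infinite: "pt (x, y, 1) \<noteq> pt (a, b, (0::'a::field))"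
  using pt_eq_imp_scalar[of "(x, y, 1)" "(a, b, 0)"] by auto

lemma pt_in_line_iff:
  assumes "v \<noteq> (0, 0, 0)"
  shows "pt v \<in> line l \<longleftrightarrow> dot3 l v = 0"
proof
  assume "pt v \<in> line l"
  then obtain v' where v': "dot3 l v' = 0" "pt v' = pt v"
    unfolding line_def by auto
  then obtain k where "v = (k * fst v', k * fst (snd v'), k * snd (snd v'))"
    using pt_eq_imp_scalar by blast
  then have "dot3 l v = k * dot3 l v'"
    by (simp add: dot3_def algebra_simps)
  then show "dot3 l v = 0" using v' by simp
next
  assume "dot3 l v = 0"
  then show "pt v \<in> line l" using assms unfolding line_def by blast
qed

lemma line_in_lines: "l \<noteq> (0, 0, 0) \<Longrightarrow> line l \<in> lines"
  unfolding lines_def by blast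

lemma inj_affine_graph: "inj (\<lambda>x. pt (x, f x, (1::'a::field)))"
  by (rule injI) (simp add: pt_affine_eq_iff)

lemma line_scale:
  fixes a b z k :: "'a::field"
  assumes "k \<noteq> 0"
  shows "line (k * a, k * b, k * z) = line (a, b, z)"
proof -
  have "dot3 (k * a, k * b, k * z) v = k * dot3 (a, b, z) v" for v
    by (simp add: dot3_def algebra_simps)
  then show ?thesis
    using assms by (simp add: line_def)
qed

section \<open>The field with \<open>q\<^sup>2\<close> elements\<close>

locale gf_q2 =
  fixes q :: nat and \<zeta> :: "'a::{field,finite}"
  assumes card_UNIV: "card (UNIV :: 'a set) = q ^ 2"
    and odd_q: "odd q"
    and primitive: "primitive_elem \<zeta>"
begin

definition frob :: "'a \<Rightarrow> 'a" where "frob x = x ^ q"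
definition Norm :: "'a \<Rightarrow> 'a" where "Norm x = x * frob x"
definition Tr :: "'a \<Rightarrow> 'a" where "Tr x = x + frob x"
definition half :: nat where "half = (q + 1) div 2"
definition eps :: 'a where "eps = \<zeta> ^ half"

lemma q_ge_3: "q \<ge> 3"
proof -
  have "card {0::'a, 1} \<le> q ^ 2"
    unfolding card_UNIV[symmetric] by (rule card_mono) auto
  then have "q \<noteq> 1" by auto
  then show ?thesis using odd_q by presburger
qed

lemma q_arith:
  shows q_Suc: "q = Suc (q - 1)"
    and card_units: "q ^ 2 - 1 = (q - 1) * (q + 1)"
    and half_Suc: "half = Suc ((q - 1) div 2)"
    and two_mult_half: "2 * half = q + 1"
    and two_mult_half_minus: "2 * ((q - 1) div 2) = q - 1"
    and half_mult_q_minus_1: "half * (q - 1) = (q ^ 2 - 1) div 2"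
    and two_mult_half_units: "2 * ((q ^ 2 - 1) div 2) = q ^ 2 - 1"
    and card_units_factor: "q ^ 2 - 1 = 2 * (q + 1) * ((q - 1) div 2)"
    and half_units_bounds: "0 < (q ^ 2 - 1) div 2" "(q ^ 2 - 1) div 2 < q ^ 2 - 1"
proof -
  obtain u where u: "q = 2 * u + 1" using odd_q oddE by blast
  have "u > 0" using q_ge_3 u by simp
  have q2: "q ^ 2 - 1 = 4 * (u * (u + 1))" by (simp add: u power2_eq_square algebra_simps)
  show "q = Suc (q - 1)" "q ^ 2 - 1 = (q - 1) * (q + 1)"
       "half = Suc ((q - 1) div 2)" "2 * half = q + 1"
       "2 * ((q - 1) div 2) = q - 1" "half * (q - 1) = (q ^ 2 - 1) div 2"
       "2 * ((q ^ 2 - 1) div 2) = q ^ 2 - 1"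
       "q ^ 2 - 1 = 2 * (q + 1) * ((q - 1) div 2)"
       "0 < (q ^ 2 - 1) div 2" "(q ^ 2 - 1) div 2 < q ^ 2 - 1"
    unfolding q2 half_def using \<open>u > 0\<close> by (simp_all add: u power2_eq_square algebra_simps)
qed

lemma power_card_units: "(x::'a) \<noteq> 0 \<Longrightarrow> x ^ (q ^ 2 - 1) = 1"
  using field_power_card_minus_one[of x] by (simp add: card_UNIV)

lemma frob_add [simp]: "frob (x + y) = frob x + frob y"
  unfolding frob_def by (rule power_add_dvd_card_field) (simp add: card_UNIV)

lemma frob_mult [simp]: "frob (x * y) = frob x * frob y"
  by (simp add: frob_def power_mult_distrib)

lemma frob_uminus [simp]: "frob (- x) = - frob x"
  using odd_q by (simp add: frob_def)

lemma frob_diff [simp]: "frob (x - y) = frob x - frob y"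
  by (metis frob_add frob_uminus diff_conv_add_uminus)

lemma frob_0 [simp]: "frob 0 = 0"
  using q_ge_3 by (simp add: frob_def)

lemma frob_1 [simp]: "frob 1 = 1"
  by (simp add: frob_def)

lemma frob_of_nat [simp]: "frob (of_nat n) = of_nat n"
  by (induction n) simp_all

lemma frob_numeral [simp]: "frob (numeral n) = numeral n"
  by (metis frob_of_nat of_nat_numeral)

lemma frob_power [simp]: "frob (x ^ n) = frob x ^ n"
  unfolding frob_def by (metis power_mult mult.commute)

lemma frob_divide [simp]: "frob (x / y) = frob x / frob y"
  by (simp add: frob_def power_divide)

lemma frob_frob [simp]: "frob (frob x) = x"
proof (cases "x = 0")
  case False
  have "q * q = Suc (q ^ 2 - 1)"
    using q_ge_3 by (simp add: power2_eq_square)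
  then have "frob (frob x) = x * x ^ (q ^ 2 - 1)"
    by (simp add: frob_def flip: power_mult)
  then show ?thesis using power_card_units[OF False] by simp
qed simp

lemma frob_eq_0_iff [simp]: "frob x = 0 \<longleftrightarrow> x = 0"
  using q_ge_3 by (simp add: frob_def)

lemma frob_Norm [simp]: "frob (Norm x) = Norm x"
  by (simp add: Norm_def mult.commute)

lemma frob_Tr [simp]: "frob (Tr x) = Tr x"
  by (simp add: Tr_def add.commute)

lemma Norm_eq_power: "Norm x = x ^ (q + 1)"
  by (simp add: Norm_def frob_def)

lemma Norm_mult: "Norm (x * y) = Norm x * Norm y"
  by (simp add: Norm_def mult_ac)

lemma Norm_eq_0_iff [simp]: "Norm x = 0 \<longleftrightarrow> x = 0"
  by (simp add: Norm_def)

lemma Norm_uminus [simp]: "Norm (- x) = Norm x"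
  by (simp add: Norm_def)

lemma Norm_divide: "Norm (x / y) = Norm x / Norm y"
  by (simp add: Norm_def)

lemma two_neq_0: "(2::'a) \<noteq> 0"
proof
  assume "(2::'a) = 0"
  then have "CHAR('a) dvd 2"
    using of_nat_eq_0_iff_char_dvd[where 'a='a, of 2] by simp
  then have "2 dvd q ^ 2"
    by (metis CHAR_dvd_CARD card_UNIV prime_dvd_card_field_eq_CHAR two_is_prime_nat
        primes_dvd_imp_eq prime_CHAR_semidom finite_imp_CHAR_pos finite_UNIV)
  then show False
    using odd_q by (simp add: prime_dvd_power_iff)
qed

lemma four_neq_0: "(4::'a) \<noteq> 0"
  using two_neq_0 by (metis mult_eq_0_iff numeral_Bit0 mult_2)

lemma neg_neq_self: "x \<noteq> 0 \<Longrightarrow> - x \<noteq> (x::'a)"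
  using two_neq_0 by (metis eq_neg_iff_add_eq_0 mult_2 mult_eq_0_iff)

lemma mem_subfield_q_iff: "x \<in> subfield_q q \<longleftrightarrow> frob x = x"
  by (simp add: subfield_q_def frob_def)

lemma card_subfield_q: "card (subfield_q q :: 'a set) \<le> q"
  unfolding subfield_q_def using card_fixed_power_le[where 'a='a] q_ge_3 by simp

lemma fixed_power_q_minus_1:
  assumes "frob x = x" "x \<noteq> 0"
  shows "x ^ (q - 1) = 1"
proof -
  have "x * x ^ (q - 1) = x * 1"
    using assms q_Suc by (simp add: frob_def flip: power_Suc)
  then show ?thesis using assms(2) by simp
qed

lemma fixed_if_power_q_minus_1: "x ^ (q - 1) = 1 \<Longrightarrow> frob x = x"
  using q_Suc by (simp add: frob_def) (metis mult.right_neutral power_Suc)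

lemma zeta_neq_0: "\<zeta> \<noteq> 0"
  using primitive_elem_neq_0[OF primitive] power_mono[OF q_ge_3, of 2] by (simp add: card_UNIV)

lemma zeta_power_eq_1_iff: "\<zeta> ^ k = 1 \<longleftrightarrow> (q ^ 2 - 1) dvd k"
  using primitive_elem_power_eq_1_iff[OF primitive zeta_neq_0] by (simp add: card_UNIV)

lemma zeta_power_half: "\<zeta> ^ ((q ^ 2 - 1) div 2) = -1"
proof -
  let ?z = "\<zeta> ^ ((q ^ 2 - 1) div 2)"
  have "?z ^ 2 = \<zeta> ^ (2 * ((q ^ 2 - 1) div 2))"
    by (metis power_mult mult.commute)
  also have "\<dots> = \<zeta> ^ (q ^ 2 - 1)"
    by (simp only: two_mult_half_units)
  finally have "?z ^ 2 = 1"
    using power_card_units zeta_neq_0 by simp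
  moreover have "?z \<noteq> 1"
    unfolding zeta_power_eq_1_iff using half_units_bounds by (meson dvd_imp_le not_le)
  ultimately show ?thesis
    unfolding power2_eq_1_iff by blast
qed

lemma square_power_half: "(z ^ 2) ^ half = Norm z"
proof -
  have "(z ^ 2) ^ half = z ^ (2 * half)"
    by (simp only: power_mult)
  then show ?thesis
    by (simp only: two_mult_half Norm_eq_power)
qed

lemma square_if_power_half_fixed:
  fixes x :: 'a
  assumes "x \<noteq> 0" "frob (x ^ half) = x ^ half"
  shows "\<exists>y. y ^ 2 = x"
proof -
  obtain k where k: "x = \<zeta> ^ k" using primitive assms(1) unfolding primitive_elem_def by blast
  have "(x ^ half) ^ (q - 1) = 1"
    using assms by (intro fixed_power_q_minus_1) simp_all
  then have "\<zeta> ^ (k * (half * (q - 1))) = 1"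
    by (simp only: k mult.assoc power_mult)
  then have "\<zeta> ^ (k * ((q ^ 2 - 1) div 2)) = 1"
    by (simp only: half_mult_q_minus_1)
  then have "2 * ((q ^ 2 - 1) div 2) dvd k * ((q ^ 2 - 1) div 2)"
    unfolding zeta_power_eq_1_iff two_mult_half_units .
  then have "2 dvd k"
    using half_units_bounds(1) by simp
  then obtain j where "k = 2 * j" ..
  then have "x = (\<zeta> ^ j) ^ 2"
    using k by (simp only: mult.commute[of 2 j] power_mult)
  then show ?thesis by blast
qed

lemma fixed_nonsquare_power_half:
  assumes "frob d = d" "d \<noteq> 0" "\<not> (\<exists>y. frob y = y \<and> y ^ 2 = d)"
  shows "d ^ half = - d"
proof -
  let ?e = "(q - 1) div 2"
  have "(d ^ ?e) ^ 2 = 1"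
    using fixed_power_q_minus_1[OF assms(1,2)] two_mult_half_minus by (simp add: mult.commute flip: power_mult)
  moreover have "d ^ ?e \<noteq> 1"
  proof
    assume d1: "d ^ ?e = 1"
    obtain k where k: "d = \<zeta> ^ k" using primitive assms unfolding primitive_elem_def by blast
    have "\<zeta> ^ (k * ?e) = 1" using d1 by (simp add: k flip: power_mult)
    then have "(2 * (q + 1)) * ?e dvd k * ?e"
      by (simp only: zeta_power_eq_1_iff card_units_factor)
    moreover have "?e \<noteq> 0" using q_ge_3 by simp
    ultimately have "2 * (q + 1) dvd k"
      using dvd_times_right_cancel_iff[of ?e "2 * (q + 1)" k] by blast
    then obtain j where j: "k = 2 * ((q + 1) * j)"
      by (metis dvdE mult.assoc)
    define y where "y = \<zeta> ^ ((q + 1) * j)"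
    have "y ^ (q - 1) = \<zeta> ^ ((q + 1) * j * (q - 1))"
      by (simp only: y_def power_mult)
    also have "(q + 1) * j * (q - 1) = (q ^ 2 - 1) * j"
      by (simp only: card_units mult_ac)
    finally have "y ^ (q - 1) = \<zeta> ^ ((q ^ 2 - 1) * j)" .
    then have "frob y = y"
      by (intro fixed_if_power_q_minus_1) (simp add: zeta_power_eq_1_iff)
    moreover have "y ^ 2 = d"
      unfolding y_def k j by (simp only: mult.commute[of 2] power_mult)
    ultimately show False using assms(3) by blast
  qed
  ultimately have "d ^ ?e = -1"
    unfolding power2_eq_1_iff by blast
  then show ?thesis unfolding half_Suc by simp
qed

lemma eps_neq_0: "eps \<noteq> 0"
  by (simp add: eps_def zeta_neq_0)

lemma frob_eps: "frob eps = - eps"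
proof -
  have "eps ^ (q - 1) = \<zeta> ^ (half * (q - 1))"
    by (simp only: eps_def power_mult)
  then have "eps ^ (q - 1) = -1"
    by (simp only: half_mult_q_minus_1 zeta_power_half)
  then show ?thesis
    using q_Suc by (simp add: frob_def) (metis mult_minus1_right power_Suc)
qed

lemma card_antifixed_le: "card {v. frob v = - v \<and> v \<noteq> 0} \<le> q - 1"
proof -
  have "{v. frob v = - v \<and> v \<noteq> 0} \<subseteq> (\<lambda>f. eps * f) ` (subfield_q q - {0})"
  proof
    fix v assume "v \<in> {v. frob v = - v \<and> v \<noteq> 0}"
    then have "v / eps \<in> subfield_q q - {0}" "v = eps * (v / eps)"
      using eps_neq_0 by (simp_all add: mem_subfield_q_iff frob_eps)
    then show "v \<in> (\<lambda>f. eps * f) ` (subfield_q q - {0})" by blast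
  qed
  then have "card {v. frob v = - v \<and> v \<noteq> 0} \<le> card ((\<lambda>f. eps * f) ` (subfield_q q - {0}))"
    by (intro card_mono) simp_all
  also have "\<dots> \<le> card (subfield_q q - {0::'a})"
    by (rule card_image_le) simp
  also have "\<dots> = card (subfield_q q :: 'a set) - 1"
    by (simp add: card_Diff_singleton mem_subfield_q_iff)
  finally show ?thesis using card_subfield_q by linarith
qed

lemma one_neq_minus_one: "(1::'a) \<noteq> -1"
  using two_neq_0 by (simp add: eq_neg_iff_add_eq_0)

lemma fixed_cases_if_q_eq_3:
  assumes q3: "q = 3" and x: "frob x = x"
  shows "x = 0 \<or> x = 1 \<or> x = -1"
proof -
  have "subfield_q q = {0, 1, -1 :: 'a}"
  proof (rule card_seteq[symmetric])
    show "{0, 1, -1 :: 'a} \<subseteq> subfield_q q"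
      by (simp add: mem_subfield_q_iff)
    show "card (subfield_q q :: 'a set) \<le> card {0, 1, -1 :: 'a}"
      using card_subfield_q q3 one_neq_minus_one by simp
  qed simp
  then show ?thesis
    using x by (auto simp: mem_subfield_q_iff[symmetric])
qed

lemma three_eq_0_if_q_eq_3:
  assumes "q = 3"
  shows "(3::'a) = 0"
proof -
  have "(2::'a) \<noteq> 1"
    by (metis one_add_one add_cancel_right_right one_neq_zero)
  then have "(2::'a) = -1"
    using fixed_cases_if_q_eq_3[OF assms, of 2] two_neq_0 by simp
  then show ?thesis
    by (metis add.commute add_neg_numeral_special(8) numeral_plus_one one_plus_numeral
        semiring_norm(3))
qed

lemma eps_square_if_q_eq_3:
  assumes "q = 3"
  shows "eps ^ 2 = -1"
proof -
  have "eps ^ 2 = \<zeta> ^ (2 * half)"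
    unfolding eps_def by (metis power_mult mult.commute)
  also have "2 * half = (q ^ 2 - 1) div 2"
    unfolding half_def using assms by simp
  finally show ?thesis
    by (simp only: zeta_power_half)
qed

end

section \<open>The quadratic form of the unital\<close>

locale pedal_setup = gf_q2 q \<zeta> for q :: nat and \<zeta> :: "'a::{field,finite}" +
  fixes \<alpha> \<beta> :: 'a
  assumes alpha_neq_0: "\<alpha> \<noteq> 0"
    and disc_nonsquare_Fq: "\<not> (\<exists>y \<in> subfield_q q. y ^ 2 = (\<beta> ^ q - \<beta>) ^ 2 + 4 * \<alpha> ^ (q + 1))"
begin

definition \<delta> :: 'a where "\<delta> = \<beta> - frob \<beta>"
definition disc :: 'a where "disc = \<delta> ^ 2 + 4 * Norm \<alpha>"
text \<open>\<open>c = w \<epsilon>\<close> with \<open>w = \<epsilon>\<^sup>2\<close>, so that \<open>R\<^sub>2 = (0, c, 1)\<close>.\<close>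

definition c :: 'a where "c = eps ^ 2 * eps"

definition qf :: "'a \<Rightarrow> 'a" where
  "qf x = \<alpha> * x ^ 2 - frob (\<alpha> * x ^ 2) + \<delta> * Norm x"

definition polar :: "'a \<Rightarrow> 'a \<Rightarrow> 'a" where
  "polar u x = 2 * \<alpha> * u * x - 2 * frob \<alpha> * frob u * frob x + \<delta> * (u * frob x + frob u * x)"

text \<open>The line \<open>y = slope u * x + c\<close> meets the unital in the points with
  \<open>qf (x - u) = qf u + 2c\<close> (\<open>line_through_R2_inter_unital\<close>).\<close>

definition slope :: "'a \<Rightarrow> 'a" where "slope u = 2 * \<alpha> * u + \<delta> * frob u"

lemma frob_delta [simp]: "frob \<delta> = - \<delta>"
  by (simp add: \<delta>_def)

lemma frob_c [simp]: "frob c = - c"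
  by (simp add: c_def frob_eps)

lemma c_neq_0: "c \<noteq> 0"
  by (simp add: c_def eps_neq_0)

lemma frob_disc [simp]: "frob disc = disc"
  by (simp add: disc_def)

lemma disc_nonsquare: "\<not> (\<exists>y. frob y = y \<and> y ^ 2 = disc)"
proof -
  have "(\<beta> ^ q - \<beta>) ^ 2 + 4 * \<alpha> ^ (q + 1) = disc"
    by (simp add: disc_def \<delta>_def Norm_eq_power flip: frob_def)
      (simp add: power2_eq_square algebra_simps)
  then show ?thesis
    using disc_nonsquare_Fq by (auto simp: mem_subfield_q_iff)
qed

lemma disc_neq_0: "disc \<noteq> 0"
  using disc_nonsquare by (metis frob_0 power_zero_numeral)

lemma disc_power_half: "disc ^ half = - disc"
  using fixed_nonsquare_power_half[OF frob_disc disc_neq_0 disc_nonsquare] .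

lemma frob_qf: "frob (qf x) = - qf x"
  by (simp add: qf_def algebra_simps)

text \<open>If \<open>qf x = 0\<close> with \<open>x \<noteq> 0\<close>, then \<open>((a + frob a) / Norm x)\<^sup>2 = disc\<close> for
  \<open>a = \<alpha> x\<^sup>2\<close>.\<close>

lemma qf_eq_0_iff [simp]: "qf x = 0 \<longleftrightarrow> x = 0"
proof
  assume qx: "qf x = 0"
  show "x = 0"
  proof (rule ccontr)
    assume x: "x \<noteq> 0"
    define a where "a = \<alpha> * x ^ 2"
    define n where "n = Norm x"
    have h1: "a - frob a = - \<delta> * n"
      using qx by (simp add: qf_def a_def n_def algebra_simps)
    have h2: "a * frob a = Norm \<alpha> * n ^ 2"
      by (simp add: a_def n_def Norm_def power2_eq_square mult_ac)
    have "(a + frob a) ^ 2 = (a - frob a) ^ 2 + 4 * (a * frob a)"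
      by (simp add: power2_eq_square algebra_simps)
    also have "\<dots> = (\<delta> * n) ^ 2 + 4 * (Norm \<alpha> * n ^ 2)"
      by (simp only: h1 h2) (simp add: power2_eq_square)
    also have "\<dots> = disc * n ^ 2"
      by (simp add: disc_def power2_eq_square algebra_simps)
    finally have "(a + frob a) ^ 2 = disc * n ^ 2" .
    then have "((a + frob a) / n) ^ 2 = disc"
      using x by (simp add: n_def power_divide)
    moreover have "frob ((a + frob a) / n) = (a + frob a) / n"
      by (simp add: n_def add.commute)
    ultimately show False using disc_nonsquare by blast
  qed
qed (simp add: qf_def Norm_def)

lemma qf_0 [simp]: "qf 0 = 0"
  by simp

lemma qf_diff: "qf (x - u) = qf x - polar u x + qf u"
  by (simp add: qf_def polar_def Norm_def power2_eq_square algebra_simps)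

lemma qf_uminus [simp]: "qf (- x) = qf x"
  by (simp add: qf_def Norm_def power2_eq_square algebra_simps)

lemma polar_self: "polar u u = 2 * qf u"
  by (simp add: qf_def polar_def Norm_def power2_eq_square algebra_simps)

lemma qf_add_scaled:
  assumes "frob l = l"
  shows "qf (u + l * x) = qf u + l * polar u x + l ^ 2 * qf x"
  using assms by (simp add: qf_def polar_def Norm_def power2_eq_square algebra_simps)

lemma slope_polar: "slope u * x - frob (slope u * x) = polar u x"
  by (simp add: slope_def polar_def algebra_simps)

lemma surj_slope: "surj slope"
proof -
  have "u = v" if "slope u = slope v" for u v
  proof (rule ccontr)
    assume "u \<noteq> v"
    define w where "w = u - v"
    have e: "2 * \<alpha> * w = - \<delta> * frob w"
      using that by (simp add: slope_def w_def algebra_simps)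
    moreover have "2 * frob \<alpha> * frob w = \<delta> * w"
      using arg_cong[OF e, of frob] by simp
    ultimately have "(2 * \<alpha> * w) * (2 * frob \<alpha> * frob w) = (- \<delta> * frob w) * (\<delta> * w)"
      by simp
    then have "disc * Norm w = 0"
      by (simp add: disc_def Norm_def power2_eq_square algebra_simps)
    then show False using disc_neq_0 \<open>u \<noteq> v\<close> by (simp add: w_def)
  qed
  then show ?thesis
    using finite_UNIV_inj_surj[of slope] by (auto intro: injI)
qed

lemma qf_add_scaled_eq_iff:
  assumes "frob l = l"
  shows "qf (a + l * w) = qf a \<longleftrightarrow> l = 0 \<or> polar a w = - l * qf w"
proof -
  have "qf (a + l * w) - qf a = l * (polar a w + l * qf w)"
    using qf_add_scaled[OF assms, of a w] by (simp add: power2_eq_square algebra_simps)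
  then show ?thesis
    by (auto simp: eq_neg_iff_add_eq_0)
qed

text \<open>A representative of \<open>d\<close> modulo nonzero factors from \<open>\<bbbF>\<^sub>q\<close>: \<open>1\<close> on \<open>\<bbbF>\<^sub>q\<close>, and
  otherwise the multiple of \<open>d\<close> in \<open>\<epsilon> + \<bbbF>\<^sub>q\<close>.\<close>

definition direction :: "'a \<Rightarrow> 'a" where
  "direction d = (if frob d = d then 1 else eps + eps * (d + frob d) / (d - frob d))"

definition directions :: "'a set" where
  "directions = insert 1 ((\<lambda>\<mu>. eps + \<mu>) ` subfield_q q)"

lemma direction_in_directions: "direction d \<in> directions"
proof (cases "frob d = d")
  case False
  have "frob (eps * (d + frob d) / (d - frob d)) = (- eps) * (frob d + d) / (frob d - d)"
    by (simp add: frob_eps)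
  also have "\<dots> = eps * (d + frob d) / (d - frob d)"
    by (metis add.commute minus_diff_eq minus_divide_divide mult_minus_left)
  finally show ?thesis
    using False by (simp add: direction_def directions_def mem_subfield_q_iff)
qed (simp add: direction_def directions_def)

lemma card_directions_le: "card directions \<le> q + 1"
proof -
  have "card directions \<le> Suc (card ((\<lambda>\<mu>. eps + \<mu>) ` subfield_q q))"
    unfolding directions_def by (simp add: card_insert_if)
  also have "card ((\<lambda>\<mu>. eps + \<mu>) ` subfield_q q) \<le> card (subfield_q q :: 'a set)"
    by (rule card_image_le) simp
  finally show ?thesis using card_subfield_q by simp
qed

lemma direction_decomp:
  assumes "d \<noteq> 0"
  shows "\<exists>l. frob l = l \<and> l \<noteq> 0 \<and> d = l * direction d"
proof (cases "frob d = d")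
  case False
  define l where "l = (d - frob d) / (2 * eps)"
  have "frob l = (frob d - d) / (2 * (- eps))"
    by (simp add: l_def frob_eps)
  also have "\<dots> = l"
    unfolding l_def by (metis minus_diff_eq minus_divide_divide mult_minus_right)
  finally have "frob l = l" .
  moreover have "l \<noteq> 0" "d = l * direction d"
    using False eps_neq_0 two_neq_0 by (simp_all add: direction_def l_def field_simps)
  ultimately show ?thesis by blast
qed (use assms in \<open>auto simp: direction_def\<close>)

text \<open>Every \<open>\<bbbF>\<^sub>q\<close>-line through a point \<open>x\<^sub>0\<close> of a fibre of \<open>qf\<close> meets the
  fibre in at most one further point, and the line in direction \<open>1 / slope x\<^sub>0\<close> (the
  tangent) in none.\<close>

lemma fibre_point_decomp:
  assumes "qf y = qf x0" "y \<noteq> x0"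
  obtains l where "frob l = l" "l \<noteq> 0" "y = x0 + l * direction (y - x0)"
    "polar x0 (direction (y - x0)) = - l * qf (direction (y - x0))"
proof -
  obtain l where l: "frob l = l" "l \<noteq> 0" "y - x0 = l * direction (y - x0)"
    using direction_decomp[of "y - x0"] assms(2) by auto
  then have "qf (x0 + l * direction (y - x0)) = qf x0"
    using assms(1) by (simp add: algebra_simps)
  then have "polar x0 (direction (y - x0)) = - l * qf (direction (y - x0))"
    using qf_add_scaled_eq_iff[OF l(1), of x0 "direction (y - x0)"] l(2) by blast
  moreover have "y = x0 + l * direction (y - x0)"
    using l(3) by (simp add: algebra_simps)
  ultimately show ?thesis
    using that l(1,2) by blast
qed

lemma inj_on_fibre_direction: "inj_on (\<lambda>y. direction (y - x0)) ({x. qf x = qf x0} - {x0})"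
proof (rule inj_onI)
  fix y1 y2
  assume y: "y1 \<in> {x. qf x = qf x0} - {x0}" "y2 \<in> {x. qf x = qf x0} - {x0}"
    and dir: "direction (y1 - x0) = direction (y2 - x0)"
  obtain l1 where l1: "y1 = x0 + l1 * direction (y1 - x0)"
    "polar x0 (direction (y1 - x0)) = - l1 * qf (direction (y1 - x0))"
    using fibre_point_decomp[of y1 x0] y(1) by auto
  obtain l2 where l2: "y2 = x0 + l2 * direction (y1 - x0)"
    "polar x0 (direction (y1 - x0)) = - l2 * qf (direction (y1 - x0))"
    using fibre_point_decomp[of y2 x0] y(2) dir by auto
  have "direction (y1 - x0) \<noteq> 0"
    using l1(1) y(1) by auto
  then have "l1 = l2"
    using l1(2) l2(2) by simp
  then show "y1 = y2"
    using l1(1) l2(1) by simp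
qed

lemma fibre_direction_neq_tangent:
  assumes y: "qf y = qf x0" "y \<noteq> x0" and x0: "qf x0 \<noteq> 0"
  shows "direction (y - x0) \<noteq> direction (1 / slope x0)"
proof
  assume z: "direction (y - x0) = direction (1 / slope x0)"
  obtain l where l: "frob l = l" "l \<noteq> 0" "y = x0 + l * direction (y - x0)"
    "polar x0 (direction (y - x0)) = - l * qf (direction (y - x0))"
    using fibre_point_decomp[OF y] .
  have "slope x0 \<noteq> 0"
    using slope_polar[of x0 x0] polar_self[of x0] x0 two_neq_0 by auto
  then obtain \<mu> where \<mu>: "frob \<mu> = \<mu>" "\<mu> \<noteq> 0" "1 / slope x0 = \<mu> * direction (y - x0)"
    using direction_decomp[of "1 / slope x0"] z by auto
  then have "slope x0 * direction (y - x0) = 1 / \<mu>"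
    using \<open>slope x0 \<noteq> 0\<close> by (simp add: field_simps)
  have "polar x0 (direction (y - x0)) = slope x0 * direction (y - x0) - frob (slope x0 * direction (y - x0))"
    by (rule slope_polar[symmetric])
  also have "\<dots> = 1 / \<mu> - frob (1 / \<mu>)"
    by (simp only: \<open>slope x0 * direction (y - x0) = 1 / \<mu>\<close>)
  finally have "polar x0 (direction (y - x0)) = 0"
    using \<mu>(1) by simp
  then have "qf (direction (y - x0)) = 0"
    using l(2,4) by simp
  then show False
    using l(3) y(2) by simp
qed

lemma card_qf_fibre_le:
  assumes v: "v \<noteq> 0"
  shows "card {x. qf x = v} \<le> q + 1"
proof (cases "{x. qf x = v} = {}")
  case False
  then obtain x0 where x0: "qf x0 = v" by blast
  let ?F = "{x. qf x = qf x0} - {x0}"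
  have "(\<lambda>y. direction (y - x0)) ` ?F \<subseteq> directions - {direction (1 / slope x0)}"
    using fibre_direction_neq_tangent x0 v direction_in_directions by auto
  then have "card ?F \<le> card (directions - {direction (1 / slope x0)})"
    using inj_on_fibre_direction by (intro card_inj_on_le) simp_all
  also have "\<dots> \<le> q"
    using card_directions_le direction_in_directions by (simp add: card_Diff_singleton)
  finally show ?thesis
    using x0 by (simp add: card_Diff_singleton)
qed simp

text \<open>The \<open>q\<^sup>2 - 1\<close> nonzero elements are shared among at most \<open>q - 1\<close> values \<open>v\<close>
  with \<open>frob v = - v\<close>, each taken at most \<open>q + 1\<close> times.\<close>

lemma card_qf_fibre:
  assumes "frob v = - v" "v \<noteq> 0"
  shows "card {x. qf x = v} = q + 1"
proof -
  let ?V = "{v. frob v = - v \<and> v \<noteq> 0}"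
  have "(\<Sum>w\<in>?V. card {x. qf x = w}) = card (\<Union>w\<in>?V. {x. qf x = w})"
    by (rule card_UN_disjoint[symmetric]) auto
  also have "\<dots> = card (UNIV - {0::'a})"
    using frob_qf by (intro arg_cong[where f = card]) auto
  also have "\<dots> = q ^ 2 - 1"
    using card_UNIV by (simp add: card_Diff_singleton)
  finally have sum_eq: "(\<Sum>w\<in>?V. card {x. qf x = w}) = (q - 1) * (q + 1)"
    by (simp only: card_units)
  show ?thesis
  proof (rule ccontr)
    assume "card {x. qf x = v} \<noteq> q + 1"
    then have "card {x. qf x = v} < q + 1"
      using card_qf_fibre_le[OF assms(2)] by simp
    then have "(\<Sum>w\<in>?V. card {x. qf x = w}) < (\<Sum>w\<in>?V. q + 1)"
      using assms card_qf_fibre_le by (intro sum_strict_mono_ex1) auto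
    also have "\<dots> = card ?V * (q + 1)"
      by simp
    also have "\<dots> \<le> (q - 1) * (q + 1)"
      using card_antifixed_le by (rule mult_right_mono) simp
    finally show False using sum_eq by simp
  qed
qed

section \<open>The pedal of \<open>R\<^sub>2\<close>\<close>

abbreviation unital :: "'a vec3 set set" where "unital \<equiv> unital_ab q \<alpha> \<beta>"

definition g :: "'a \<Rightarrow> 'a" where "g x = \<alpha> * x ^ 2 + \<beta> * x ^ (q + 1)"

definition pedal_xs :: "'a set" where "pedal_xs = {u. qf u = - 2 * c}"

definition pedal_y :: "'a \<Rightarrow> 'a" where "pedal_y x = Tr (\<alpha> * x ^ 2) - c"

definition pedal_pts :: "'a vec3 set set" where
  "pedal_pts = (\<lambda>x. pt (x, pedal_y x, 1)) ` pedal_xs"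

lemma card_pedal_xs: "card pedal_xs = q + 1"
  unfolding pedal_xs_def using c_neq_0 two_neq_0 by (intro card_qf_fibre) simp_all

lemma g_minus_frob: "g x - frob (g x) = qf x"
proof -
  have "g x = \<alpha> * x ^ 2 + \<beta> * Norm x"
    by (simp add: g_def Norm_eq_power)
  then show ?thesis
    by (simp add: qf_def \<delta>_def algebra_simps)
qed

lemma unital_affine_iff: "pt (x, y, 1) \<in> unital \<longleftrightarrow> frob (y - g x) = y - g x"
proof
  assume "pt (x, y, 1) \<in> unital"
  then obtain x' r where "pt (x, y, 1) = pt (x', g x' + r, 1)" "r \<in> subfield_q q"
    using pt_affine_neq_infinite[of x y 0 1] by (auto simp: unital_ab_def g_def)
  then show "frob (y - g x) = y - g x"
    by (auto simp: pt_affine_eq_iff mem_subfield_q_iff)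
next
  assume "frob (y - g x) = y - g x"
  then have "y - g x \<in> subfield_q q"
    by (simp add: mem_subfield_q_iff)
  moreover have "pt (x, y, 1) = pt (x, \<alpha> * x ^ 2 + \<beta> * x ^ (q + 1) + (y - g x), 1)"
    by (simp add: g_def)
  ultimately show "pt (x, y, 1) \<in> unital"
    unfolding unital_ab_def by blast
qed

lemma unital_cases:
  assumes "P \<in> unital"
  obtains "P = pt (0, 1, 0)" | x y where "P = pt (x, y, 1)" "frob (y - g x) = y - g x"
  using assms unfolding unital_ab_def g_def[symmetric]
  by (auto simp: mem_subfield_q_iff)

lemma affine_line_meets_unital_iff:
  assumes "slope u = m"
  shows "frob (m * x + c - g x) = m * x + c - g x \<longleftrightarrow> qf (x - u) = qf u + 2 * c"
proof -
  have "(m * x + c - g x) - frob (m * x + c - g x) = (m * x - frob (m * x)) + 2 * c - (g x - frob (g x))"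
    by (simp add: algebra_simps)
  also have "\<dots> = polar u x + 2 * c - qf x"
    using slope_polar[of u x] assms by (simp only: g_minus_frob)
  also have "\<dots> = - (qf (x - u) - (qf u + 2 * c))"
    using qf_diff[of x u] by (simp add: algebra_simps)
  finally show ?thesis
    by (metis eq_iff_diff_eq_0 neg_equal_0_iff_equal)
qed

lemma line_through_R2_inter_unital:
  assumes "slope u = m"
  shows "line (m, -1, c) \<inter> unital = (\<lambda>x. pt (x, m * x + c, 1)) ` {x. qf (x - u) = qf u + 2 * c}"
proof -
  have on_line: "pt (x, y, 1) \<in> line (m, -1, c) \<longleftrightarrow> y = m * x + c" for x y
    by (auto simp: pt_in_line_iff dot3_def algebra_simps)
  have "pt (0, 1, 0) \<notin> line (m, -1, c)"
    by (simp add: pt_in_line_iff dot3_def)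
  have "line (m, -1, c) \<inter> unital = (\<lambda>x. pt (x, m * x + c, 1)) ` {x. pt (x, m * x + c, 1) \<in> unital}"
  proof (intro equalityI subsetI)
    fix P assume P: "P \<in> line (m, -1, c) \<inter> unital"
    then have "P \<in> unital" by simp
    then show "P \<in> (\<lambda>x. pt (x, m * x + c, 1)) ` {x. pt (x, m * x + c, 1) \<in> unital}"
    proof (rule unital_cases)
      assume "P = pt (0, 1, 0)"
      then show ?thesis using P \<open>pt (0, 1, 0) \<notin> line (m, -1, c)\<close> by simp
    next
      fix x y assume "P = pt (x, y, 1)"
      then show ?thesis using P on_line by auto
    qed
  qed (use on_line in auto)
  also have "{x. pt (x, m * x + c, 1) \<in> unital} = {x. qf (x - u) = qf u + 2 * c}"
    using affine_line_meets_unital_iff[OF assms] by (simp add: unital_affine_iff)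
  finally show ?thesis .
qed

lemma qf_shifted_fibre_singleton:
  assumes S: "{x. qf (x - u) = w} = {x0}"
  shows "x0 = u" "w = 0"
proof -
  define x1 where "x1 = u - (x0 - u)"
  have x1: "x1 - u = - (x0 - u)"
    by (simp add: x1_def algebra_simps)
  then have "qf (x1 - u) = qf (x0 - u)"
    by (metis qf_uminus)
  moreover have "qf (x0 - u) = w"
    using S by auto
  ultimately have "x1 = x0"
    using S by auto
  then have "x0 - u = - (x0 - u)"
    using x1 by simp
  then have "2 * (x0 - u) = 0"
    by (simp only: mult_2 eq_neg_iff_add_eq_0)
  then show "x0 = u"
    using two_neq_0 by simp
  then show "w = 0"
    using S by auto
qed

lemma pedal_y_eq:
  assumes "u \<in> pedal_xs"
  shows "slope u * u + c = pedal_y u"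
proof -
  have "slope u * u + c - pedal_y u = qf u + 2 * c"
    by (simp add: slope_def pedal_y_def Tr_def qf_def Norm_def power2_eq_square algebra_simps)
  also have "\<dots> = 0"
    using assms by (simp add: pedal_xs_def)
  finally show ?thesis
    by simp
qed

lemma lines_through_R2:
  assumes "l \<in> lines" "pt (0, c, 1) \<in> l"
  shows "l = line (1, 0, 0) \<or> (\<exists>m. l = line (m, -1, c))"
proof -
  obtain L1 L2 L3 where l: "l = line (L1, L2, L3)" "(L1, L2, L3) \<noteq> (0, 0, 0)"
    using assms(1) unfolding lines_def by auto
  then have "L2 * c + L3 = 0"
    using assms(2) by (simp add: pt_in_line_iff dot3_def)
  then have L3: "L3 = - L2 * c"
    by (simp add: eq_neg_iff_add_eq_0 add.commute)
  show ?thesis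
  proof (cases "L2 = 0")
    case True
    then have "l = line (L1 * 1, L1 * 0, L1 * 0)" "L1 \<noteq> 0"
      using l L3 by simp_all
    then show ?thesis using line_scale by metis
  next
    case False
    then have "l = line ((- L2) * (- L1 / L2), (- L2) * (-1), (- L2) * c)"
      using l L3 by simp
    then show ?thesis using line_scale False by (metis neg_equal_0_iff_equal)
  qed
qed

lemma vertical_line_not_tangent: "line (1, 0, 0) \<inter> unital \<noteq> {P}"
proof
  assume tangent: "line (1, 0, 0) \<inter> unital = {P}"
  have "pt (0, 1, 0) \<in> line (1, 0, 0) \<inter> unital"
    by (simp add: unital_ab_def pt_in_line_iff dot3_def)
  moreover have "pt (0, 0, 1) \<in> line (1, 0, 0) \<inter> unital"
    using unital_affine_iff[of 0 0] by (simp add: g_def pt_in_line_iff dot3_def)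
  ultimately have "pt (0, 0, 1) = pt (0, 1, (0::'a))"
    using tangent by (metis singletonD)
  then show False
    by (metis pt_affine_neq_infinite)
qed

lemma tangent_through_R2_contact:
  assumes l: "l \<in> lines" "pt (0, c, 1) \<in> l" and tangent: "l \<inter> unital = {P}"
  shows "P \<in> pedal_pts"
proof -
  obtain m where m: "l = line (m, -1, c)"
    using lines_through_R2[OF l] vertical_line_not_tangent tangent by blast
  obtain u where u: "slope u = m"
    using surj_slope by (metis surjD)
  define S where "S = {x. qf (x - u) = qf u + 2 * c}"
  have "(\<lambda>x. pt (x, m * x + c, 1)) ` S = {P}"
    unfolding S_def line_through_R2_inter_unital[OF u, symmetric] using tangent by (simp only: m)
  moreover have "inj_on (\<lambda>x. pt (x, m * x + c, 1)) S"
    by (rule inj_on_subset[OF inj_affine_graph]) simp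
  ultimately obtain x0 where "S = {x0}" "P = pt (x0, m * x0 + c, 1)"
    by (rule image_eq_singleton_inj)
  then have "x0 = u" "u \<in> pedal_xs" "P = pt (u, m * u + c, 1)"
    using qf_shifted_fibre_singleton[of u "qf u + 2 * c" x0]
    by (auto simp: S_def pedal_xs_def eq_neg_iff_add_eq_0)
  then show "P \<in> pedal_pts"
    using pedal_y_eq u by (auto simp: pedal_pts_def)
qed

lemma tangent_at_pedal_point:
  assumes u: "u \<in> pedal_xs"
  shows "line (slope u, -1, c) \<inter> unital = {pt (u, pedal_y u, 1)}"
proof -
  have "{x. qf (x - u) = qf u + 2 * c} = {u}"
    using u by (auto simp: pedal_xs_def)
  then show ?thesis
    using line_through_R2_inter_unital[OF refl] pedal_y_eq[OF u] by simp
qed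

lemma pedal_eq: "pedal unital (pt (0, c, 1)) = pedal_pts"
proof
  show "pedal unital (pt (0, c, 1)) \<subseteq> pedal_pts"
    unfolding pedal_def using tangent_through_R2_contact by blast
  show "pedal_pts \<subseteq> pedal unital (pt (0, c, 1))"
  proof
    fix P assume "P \<in> pedal_pts"
    then obtain u where u: "u \<in> pedal_xs" "P = pt (u, pedal_y u, 1)"
      by (auto simp: pedal_pts_def)
    have "line (slope u, -1, c) \<in> lines"
      using c_neq_0 by (intro line_in_lines) simp
    moreover have "pt (0, c, 1) \<in> line (slope u, -1, c)"
      by (simp add: pt_in_line_iff dot3_def)
    ultimately show "P \<in> pedal unital (pt (0, c, 1))"
      unfolding pedal_def using tangent_at_pedal_point[OF u(1)] u(2) by blast
  qed
qed

section \<open>Lines meeting the pedal\<close>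

definition xs_on_line :: "'a \<Rightarrow> 'a \<Rightarrow> 'a \<Rightarrow> 'a set" where
  "xs_on_line a b z = {x \<in> pedal_xs. a * x + b * pedal_y x + z = 0}"

definition level :: "'a \<Rightarrow> 'a set" where
  "level t = {x \<in> pedal_xs. Tr (\<alpha> * x ^ 2) = t}"

definition horizontal :: "'a \<Rightarrow> 'a vec3 set set" where
  "horizontal t = line (0, 1, c - t)"

lemma card_line_inter_pedal:
  assumes "(a, b, z) \<noteq> (0, 0, 0)"
  shows "card (line (a, b, z) \<inter> pedal_pts) = card (xs_on_line a b z)"
proof -
  have "line (a, b, z) \<inter> pedal_pts = (\<lambda>x. pt (x, pedal_y x, 1)) ` xs_on_line a b z"
    by (auto simp: pedal_pts_def xs_on_line_def pt_in_line_iff dot3_def)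
  moreover have "inj_on (\<lambda>x. pt (x, pedal_y x, 1)) (xs_on_line a b z)"
    by (rule inj_on_subset[OF inj_affine_graph]) simp
  ultimately show ?thesis
    by (simp add: card_image)
qed

lemma card_xs_on_vertical_line_le:
  assumes "a \<noteq> 0"
  shows "card (xs_on_line a 0 z) \<le> 1"
proof -
  have "xs_on_line a 0 z \<subseteq> {- z / a}"
    using assms by (auto simp: xs_on_line_def field_simps eq_neg_iff_add_eq_0)
  then show ?thesis
    using card_mono[of "{- z / a}"] by fastforce
qed

lemma xs_on_horizontal_line:
  assumes "b \<noteq> 0"
  shows "xs_on_line 0 b z = level (c - z / b)"
proof -
  have "b * pedal_y x + z = 0 \<longleftrightarrow> Tr (\<alpha> * x ^ 2) = c - z / b" for x
    using assms by (auto simp: pedal_y_def field_simps)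
  then show ?thesis
    by (auto simp: xs_on_line_def level_def)
qed

text \<open>On a line that is neither vertical nor horizontal, the \<open>y\<close>-coordinates of
  the pedal points differ by elements of \<open>\<bbbF>\<^sub>q\<close>; so these points lie on an
  \<open>\<bbbF>\<^sub>q\<close>-line of the plane \<open>\<bbbF>\<^sub>q\<^sup>2\<close>, which meets the fibre
  \<open>qf = -2c\<close> at most twice.\<close>

lemma card_xs_on_oblique_line_le:
  assumes "a \<noteq> 0" "b \<noteq> 0"
  shows "card (xs_on_line a b z) \<le> 2"
proof (cases "xs_on_line a b z = {}")
  case False
  then obtain x0 where x0: "x0 \<in> xs_on_line a b z" by blast
  define \<rho> where "\<rho> = - b / a"
  have "qf \<rho> \<noteq> 0" using assms by (simp add: \<rho>_def)
  have "xs_on_line a b z \<subseteq> (\<lambda>l. x0 + l * \<rho>) ` {0, - polar x0 \<rho> / qf \<rho>}"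
  proof
    fix x assume x: "x \<in> xs_on_line a b z"
    define l where "l = pedal_y x - pedal_y x0"
    have e: "a * x + b * pedal_y x + z = 0" "a * x0 + b * pedal_y x0 + z = 0"
      using x x0 by (simp_all add: xs_on_line_def)
    have "a * (x - x0) + b * l = (a * x + b * pedal_y x + z) - (a * x0 + b * pedal_y x0 + z)"
      by (simp add: l_def algebra_simps)
    then have "a * (x - x0) + b * l = 0"
      by (simp only: e) simp
    then have x_eq: "x = x0 + l * \<rho>"
      using assms(1) by (simp add: \<rho>_def field_simps eq_neg_iff_add_eq_0)
    have "frob l = l"
      by (simp add: l_def pedal_y_def)
    moreover have "qf (x0 + l * \<rho>) = qf x0"
      using x x0 x_eq by (simp add: xs_on_line_def pedal_xs_def)
    ultimately have "l = 0 \<or> polar x0 \<rho> = - l * qf \<rho>"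
      using qf_add_scaled_eq_iff by blast
    then have "l \<in> {0, - polar x0 \<rho> / qf \<rho>}"
      using \<open>qf \<rho> \<noteq> 0\<close> by (auto simp: field_simps)
    then show "x \<in> (\<lambda>l. x0 + l * \<rho>) ` {0, - polar x0 \<rho> / qf \<rho>}"
      using x_eq by blast
  qed
  then have "card (xs_on_line a b z) \<le> card ((\<lambda>l. x0 + l * \<rho>) ` {0, - polar x0 \<rho> / qf \<rho>})"
    by (rule card_mono[rotated]) simp
  also have "\<dots> \<le> card {0, - polar x0 \<rho> / qf \<rho>}"
    by (rule card_image_le) simp
  also have "\<dots> \<le> 2"
    by (simp add: card_insert_if)
  finally show ?thesis .
qed simp

lemma card_horizontal_inter_pedal: "card (horizontal t \<inter> pedal_pts) = card (level t)"
  unfolding horizontal_def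
  by (subst card_line_inter_pedal) (simp_all add: xs_on_horizontal_line)

lemma horizontal_in_lines: "horizontal t \<in> lines"
  unfolding horizontal_def by (rule line_in_lines) simp

lemma line_inter_pedal_cases:
  assumes "l \<in> lines"
  shows "card (l \<inter> pedal_pts) \<le> 2 \<or> (\<exists>t. l = horizontal t)"
proof -
  obtain a b z where l: "l = line (a, b, z)" "(a, b, z) \<noteq> (0, 0, 0)"
    using assms unfolding lines_def by auto
  consider "b = 0" | "a = 0" "b \<noteq> 0" | "a \<noteq> 0" "b \<noteq> 0" by blast
  then show ?thesis
  proof cases
    case 1
    then have "card (xs_on_line a b z) \<le> 1"
      using l(2) card_xs_on_vertical_line_le[of a z]
      by (cases "a = 0") (auto simp: xs_on_line_def)
    then show ?thesis
      using card_line_inter_pedal[OF l(2)] l(1) by simp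
  next
    case 2
    have "l = line (b * 0, b * 1, b * (z / b))"
      using 2 l(1) by simp
    also have "\<dots> = line (0, 1, z / b)"
      by (rule line_scale[OF \<open>b \<noteq> 0\<close>])
    finally have "l = horizontal (c - z / b)"
      by (simp add: horizontal_def)
    then show ?thesis by blast
  next
    case 3
    then show ?thesis
      using card_line_inter_pedal[OF l(2)] card_xs_on_oblique_line_le l(1) by simp
  qed
qed

definition norm_poly :: "'a \<Rightarrow> 'a \<Rightarrow> 'a" where
  "norm_poly t n = disc * n ^ 2 + 4 * c * \<delta> * n + 4 * c ^ 2 - t ^ 2"

lemma frob_level: "x \<in> level t \<Longrightarrow> frob t = t"
  by (auto simp: level_def)

lemma mem_level_iff:
  assumes t: "frob t = t"
  shows "x \<in> level t \<longleftrightarrow> 2 * (\<alpha> * x ^ 2) = t - 2 * c - \<delta> * Norm x"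
proof -
  define a where "a = \<alpha> * x ^ 2"
  define n where "n = Norm x"
  have "x \<in> level t \<longleftrightarrow> a - frob a + \<delta> * n = - 2 * c \<and> a + frob a = t"
    by (simp add: level_def pedal_xs_def qf_def Tr_def a_def n_def)
  also have "\<dots> \<longleftrightarrow> 2 * a = t - 2 * c - \<delta> * n"
  proof
    assume h: "a - frob a + \<delta> * n = - 2 * c \<and> a + frob a = t"
    have "2 * a = (a - frob a + \<delta> * n) + (a + frob a) - \<delta> * n"
      by (simp add: algebra_simps)
    then show "2 * a = t - 2 * c - \<delta> * n"
      using h by simp
  next
    assume h: "2 * a = t - 2 * c - \<delta> * n"
    have h': "2 * frob a = t + 2 * c + \<delta> * n"
      using arg_cong[OF h, of frob] t by (simp add: n_def)
    have "2 * (a - frob a + \<delta> * n) = 2 * (- 2 * c)" "2 * (a + frob a) = 2 * t"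
      using h h' by (simp_all add: algebra_simps)
    then show "a - frob a + \<delta> * n = - 2 * c \<and> a + frob a = t"
      using mult_left_cancel[OF two_neq_0] by blast
  qed
  finally show ?thesis
    by (simp add: a_def n_def)
qed

lemma level_neq_0: "x \<in> level t \<Longrightarrow> x \<noteq> 0"
  using c_neq_0 two_neq_0 by (auto simp: level_def pedal_xs_def)

lemma level_uminus: "x \<in> level t \<Longrightarrow> - x \<in> level t"
  by (simp add: level_def pedal_xs_def)

lemma level_same_Norm:
  assumes "x \<in> level t" "y \<in> level t" "Norm y = Norm x"
  shows "y = x \<or> y = - x"
proof -
  have "2 * (\<alpha> * y ^ 2) = 2 * (\<alpha> * x ^ 2)"
    using assms mem_level_iff[OF frob_level[OF assms(1)]] by simp
  then have "(y - x) * (y + x) = 0"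
    using two_neq_0 alpha_neq_0 by (simp add: power2_eq_square algebra_simps)
  then show ?thesis
    by (simp add: eq_neg_iff_add_eq_0)
qed

lemma Norm_fixed_minus_2c: "frob t = t \<Longrightarrow> Norm (t - 2 * c) = t ^ 2 - 4 * c ^ 2"
  by (simp add: Norm_def power2_eq_square algebra_simps)

lemma level_norm_poly:
  assumes x: "x \<in> level t"
  shows "norm_poly t (Norm x) = 0"
proof -
  define a where "a = \<alpha> * x ^ 2"
  define n where "n = Norm x"
  have t: "frob t = t"
    using frob_level[OF x] .
  have a: "2 * a = t - 2 * c - \<delta> * n"
    using x mem_level_iff[OF t] by (simp add: a_def n_def)
  have "2 * frob a = t + 2 * c + \<delta> * n"
    using arg_cong[OF a, of frob] t by (simp add: n_def)
  moreover have "a * frob a = Norm \<alpha> * n ^ 2"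
    by (simp add: a_def n_def Norm_def power2_eq_square mult_ac)
  ultimately have "4 * (Norm \<alpha> * n ^ 2) = (t - 2 * c - \<delta> * n) * (t + 2 * c + \<delta> * n)"
    using a by (metis mult.assoc mult.left_commute mult_2 numeral_Bit0)
  then show ?thesis
    by (simp add: norm_poly_def disc_def n_def[symmetric] power2_eq_square algebra_simps)
qed

lemma norm_poly_roots:
  assumes "norm_poly t n1 = 0" "norm_poly t n2 = 0"
  shows "n2 = n1 \<or> disc * n2 = - 4 * c * \<delta> - disc * n1"
proof -
  have "(n2 - n1) * (disc * (n2 + n1) + 4 * c * \<delta>) = norm_poly t n2 - norm_poly t n1"
    by (simp add: norm_poly_def power2_eq_square algebra_simps)
  then have "n2 - n1 = 0 \<or> disc * (n2 + n1) + 4 * c * \<delta> = 0"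
    using assms by simp
  then show ?thesis
    by (auto simp: algebra_simps eq_neg_iff_add_eq_0)
qed

lemma norm_poly_product:
  assumes "norm_poly t n1 = 0" "disc * n2 = - 4 * c * \<delta> - disc * n1"
  shows "disc * n1 * n2 = 4 * c ^ 2 - t ^ 2"
proof -
  have "disc * n1 * n2 = n1 * (disc * n2)" by simp
  also have "\<dots> = - (disc * n1 ^ 2 + 4 * c * \<delta> * n1)"
    by (simp only: assms(2)) (simp add: power2_eq_square algebra_simps)
  also have "\<dots> = 4 * c ^ 2 - t ^ 2"
    using assms(1) by (simp add: norm_poly_def algebra_simps)
  finally show ?thesis .
qed

lemma disc_mult_squares:
  assumes s: "disc * n2 = - 4 * c * \<delta> - disc * n1" and p: "disc * n1 * n2 = 4 * c ^ 2 - t ^ 2"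
    and a1: "2 * a1 = t - 2 * c - \<delta> * n1" and a2: "2 * a2 = t - 2 * c - \<delta> * n2"
  shows "disc * a1 * a2 = Norm \<alpha> * (t - 2 * c) ^ 2"
proof -
  have s': "disc * (n1 + n2) = - 4 * c * \<delta>"
    using s by (simp add: algebra_simps)
  have "4 * (disc * a1 * a2) = disc * (2 * a1) * (2 * a2)"
    by simp
  also have "\<dots> = disc * (t - 2 * c) ^ 2 - \<delta> * (t - 2 * c) * (disc * (n1 + n2)) + \<delta> ^ 2 * (disc * n1 * n2)"
    by (simp only: a1 a2) (simp add: power2_eq_square algebra_simps)
  also have "\<dots> = 4 * (Norm \<alpha> * (t - 2 * c) ^ 2)"
    by (simp only: s' p) (simp add: disc_def power2_eq_square algebra_simps)
  finally show ?thesis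
    using four_neq_0 by simp
qed

text \<open>Raising the identity of \<open>disc_mult_squares\<close> to the power \<open>(q + 1) / 2\<close>
  turns squares into norms and the nonsquare \<open>disc\<close> into \<open>-disc\<close>.\<close>

lemma power_half_level_product:
  assumes x: "x \<in> level t" and n2: "disc * n2 = - 4 * c * \<delta> - disc * Norm x"
    and a2: "2 * a2 = t - 2 * c - \<delta> * n2"
  shows "(\<alpha> * x ^ 2) ^ half * a2 ^ half = Norm \<alpha> ^ half * Norm x * n2"
proof -
  have t: "frob t = t" using frob_level[OF x] .
  have p: "disc * Norm x * n2 = 4 * c ^ 2 - t ^ 2"
    using norm_poly_product[OF level_norm_poly[OF x] n2] .
  have "disc * (\<alpha> * x ^ 2) * a2 = Norm \<alpha> * (t - 2 * c) ^ 2"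
    using disc_mult_squares[OF n2 p _ a2] x mem_level_iff[OF t] by simp
  then have "(disc * (\<alpha> * x ^ 2) * a2) ^ half = (Norm \<alpha> * (t - 2 * c) ^ 2) ^ half"
    by simp
  then have "- disc * ((\<alpha> * x ^ 2) ^ half * a2 ^ half) = Norm \<alpha> ^ half * (t ^ 2 - 4 * c ^ 2)"
    by (simp only: power_mult_distrib disc_power_half square_power_half Norm_fixed_minus_2c[OF t])
      (simp add: mult_ac)
  also have "t ^ 2 - 4 * c ^ 2 = - (disc * Norm x * n2)"
    using p by simp
  also have "Norm \<alpha> ^ half * - (disc * Norm x * n2) = - disc * (Norm \<alpha> ^ half * Norm x * n2)"
    by (simp add: mult_ac)
  finally show ?thesis
    using disc_neq_0 by simp
qed

lemma square_if_level_norms_differ: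
  assumes x: "x \<in> level t" and y: "y \<in> level t" and ne: "Norm y \<noteq> Norm x"
  shows "\<exists>s. s ^ 2 = \<alpha>"
proof -
  have n2: "disc * Norm y = - 4 * c * \<delta> - disc * Norm x"
    using norm_poly_roots[OF level_norm_poly[OF x] level_norm_poly[OF y]] ne by simp
  have a2: "2 * (\<alpha> * y ^ 2) = t - 2 * c - \<delta> * Norm y"
    using y mem_level_iff[OF frob_level[OF x]] by simp
  have "\<alpha> ^ half * \<alpha> ^ half * (Norm x * Norm y) = \<alpha> ^ half * frob (\<alpha> ^ half) * (Norm x * Norm y)"
    using power_half_level_product[OF x n2 a2]
    by (simp add: power_mult_distrib square_power_half Norm_def mult_ac)
  then have "\<alpha> ^ half = frob (\<alpha> ^ half)"
    using alpha_neq_0 level_neq_0[OF x] level_neq_0[OF y] by simp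
  then show ?thesis
    using square_if_power_half_fixed[OF alpha_neq_0] by simp
qed

lemma card_level_le_2:
  assumes "\<not> (\<exists>s. s ^ 2 = \<alpha>)"
  shows "card (level t) \<le> 2"
proof (cases "level t = {}")
  case False
  then obtain x where x: "x \<in> level t" by blast
  have "level t \<subseteq> {x, - x}"
    using level_same_Norm[OF x] square_if_level_norms_differ[OF x] assms by blast
  then have "card (level t) \<le> card {x, - x}"
    by (rule card_mono[rotated]) simp
  also have "\<dots> \<le> 2"
    by (simp add: card_insert_if)
  finally show ?thesis .
qed simp

lemma other_root_fixed_nonzero:
  assumes x: "x \<in> level t" and n2: "disc * n2 = - 4 * c * \<delta> - disc * Norm x"
  shows "frob n2 = n2" "n2 \<noteq> 0"
proof -
  have "n2 = (- 4 * c * \<delta> - disc * Norm x) / disc"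
    using n2 disc_neq_0 by (simp add: field_simps)
  then show "frob n2 = n2" by simp
  have t: "frob t = t" using frob_level[OF x] .
  show "n2 \<noteq> 0"
  proof
    assume "n2 = 0"
    then have "Norm (t - 2 * c) = 0"
      using norm_poly_product[OF level_norm_poly[OF x] n2] Norm_fixed_minus_2c[OF t] by simp
    then have "t = 2 * c" by simp
    then show False
      using t c_neq_0 two_neq_0 four_neq_0 by (auto simp: eq_neg_iff_add_eq_0)
  qed
qed

lemma power_half_other_root:
  assumes s: "s ^ 2 = \<alpha>" and x: "x \<in> level t"
    and n2: "disc * n2 = - 4 * c * \<delta> - disc * Norm x" and a2: "2 * a2 = t - 2 * c - \<delta> * n2"
  shows "a2 ^ half = Norm s * n2"
proof -
  have "(\<alpha> * x ^ 2) ^ half = Norm s * Norm x"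
  proof -
    have "\<alpha> * x ^ 2 = (s * x) ^ 2"
      using s by (simp add: power_mult_distrib)
    then show ?thesis
      by (simp only: square_power_half Norm_mult)
  qed
  moreover have "Norm \<alpha> ^ half = Norm s * Norm s"
  proof -
    have "Norm \<alpha> = (Norm s) ^ 2"
      using s Norm_mult[of s s] by (simp add: power2_eq_square)
    then show ?thesis
      by (simp only: square_power_half Norm_def[of "Norm s"] frob_Norm)
  qed
  ultimately have "Norm s * Norm x * a2 ^ half = Norm s * Norm x * (Norm s * n2)"
    using power_half_level_product[OF x n2 a2] by (simp add: mult_ac)
  moreover have "s \<noteq> 0"
    using s alpha_neq_0 by auto
  ultimately show ?thesis
    using level_neq_0[OF x] by simp
qed

lemma level_other_root:
  assumes s: "s ^ 2 = \<alpha>" and x: "x \<in> level t"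
    and n2: "disc * n2 = - 4 * c * \<delta> - disc * Norm x"
  shows "\<exists>y \<in> level t. Norm y = n2"
proof -
  define a2 where "a2 = (t - 2 * c - \<delta> * n2) / 2"
  have a2: "2 * a2 = t - 2 * c - \<delta> * n2"
    using two_neq_0 by (simp add: a2_def)
  have s0: "s \<noteq> 0"
    using s alpha_neq_0 by auto
  note n2_props = other_root_fixed_nonzero[OF x n2]
  have a2h: "a2 ^ half = Norm s * n2"
    using power_half_other_root[OF s x n2 a2] .
  then have "a2 ^ half \<noteq> 0"
    using s0 n2_props by simp
  then have "a2 \<noteq> 0"
    by (simp add: half_Suc)
  then obtain z where z: "z ^ 2 = a2"
    using square_if_power_half_fixed[of a2] a2h n2_props by auto
  define y where "y = z / s"
  have "Norm z = Norm s * n2"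
    using square_power_half[of z] z a2h by simp
  then have Ny: "Norm y = n2"
    using s0 by (simp add: y_def Norm_divide)
  have "\<alpha> * y ^ 2 = a2"
    using s alpha_neq_0 z by (simp add: y_def power_divide)
  then have "y \<in> level t"
    using a2 Ny mem_level_iff[OF frob_level[OF x]] by simp
  then show ?thesis
    using Ny by blast
qed

lemma level_double_root:
  assumes x: "x \<in> level t" and e: "disc * Norm x = - 2 * c * \<delta>"
  shows "disc * t ^ 2 = 16 * c ^ 2 * Norm \<alpha>"
proof -
  have "0 = disc * norm_poly t (Norm x)"
    using level_norm_poly[OF x] by simp
  also have "\<dots> = (disc * Norm x) ^ 2 + 4 * c * \<delta> * (disc * Norm x) + disc * (4 * c ^ 2 - t ^ 2)"
    by (simp add: norm_poly_def power2_eq_square algebra_simps)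
  also have "\<dots> = (- 2 * c * \<delta>) ^ 2 + 4 * c * \<delta> * (- 2 * c * \<delta>) + disc * (4 * c ^ 2 - t ^ 2)"
    by (simp only: e)
  finally have "disc * t ^ 2 = 4 * c ^ 2 * (disc - \<delta> ^ 2)"
    by (simp add: power2_eq_square algebra_simps)
  then show ?thesis
    by (simp add: disc_def algebra_simps)
qed

lemma level_norms:
  assumes x: "x \<in> level t" and n2: "disc * n2 = - 4 * c * \<delta> - disc * Norm x"
    and v: "v \<in> level t"
  shows "Norm v = Norm x \<or> Norm v = n2"
  using norm_poly_roots[OF level_norm_poly[OF x] level_norm_poly[OF v]] n2 disc_neq_0
  by (metis mult_left_cancel)

lemma card_level_eq_4:
  assumes s: "s ^ 2 = \<alpha>" and x: "x \<in> level t"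
    and n2: "disc * n2 = - 4 * c * \<delta> - disc * Norm x" and ne: "n2 \<noteq> Norm x"
  shows "card (level t) = 4"
proof -
  obtain y where y: "y \<in> level t" "Norm y = n2"
    using level_other_root[OF s x n2] by blast
  have "level t = {x, - x, y, - y}"
  proof
    show "level t \<subseteq> {x, - x, y, - y}"
      using level_norms[OF x n2] level_same_Norm[OF x] level_same_Norm[OF y(1)] y(2) by blast
    show "{x, - x, y, - y} \<subseteq> level t"
      using x y(1) level_uminus by auto
  qed
  moreover have "x \<noteq> y" "x \<noteq> - y" "- x \<noteq> y" "- x \<noteq> - y"
    using ne y(2) by auto
  ultimately show ?thesis
    using neg_neq_self level_neq_0[OF x] level_neq_0[OF y(1)] by simp
qed

lemma card_level_eq_2:
  assumes x: "x \<in> level t"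
    and n2: "disc * n2 = - 4 * c * \<delta> - disc * Norm x" and eq: "n2 = Norm x"
  shows "card (level t) = 2" "disc * t ^ 2 = 16 * c ^ 2 * Norm \<alpha>"
proof -
  have "level t = {x, - x}"
  proof
    show "level t \<subseteq> {x, - x}"
      using level_norms[OF x n2] eq level_same_Norm[OF x] by blast
    show "{x, - x} \<subseteq> level t"
      using x level_uminus by auto
  qed
  then show "card (level t) = 2"
    using neg_neq_self level_neq_0[OF x] by simp
  have "disc * Norm x = - 2 * c * \<delta>"
    using n2 eq mult_left_cancel[OF two_neq_0, of "disc * Norm x" "- 2 * c * \<delta>"]
    by (simp add: algebra_simps)
  then show "disc * t ^ 2 = 16 * c ^ 2 * Norm \<alpha>"
    by (rule level_double_root[OF x])
qed

lemma card_level_cases: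
  assumes s: "s ^ 2 = \<alpha>"
  shows "card (level t) = 0 \<or> card (level t) = 4 \<or> (card (level t) = 2 \<and> disc * t ^ 2 = 16 * c ^ 2 * Norm \<alpha>)"
proof (cases "level t = {}")
  case False
  then obtain x where x: "x \<in> level t" by blast
  define n2 where "n2 = (- 4 * c * \<delta> - disc * Norm x) / disc"
  have n2: "disc * n2 = - 4 * c * \<delta> - disc * Norm x"
    using disc_neq_0 by (simp add: n2_def)
  show ?thesis
    using card_level_eq_4[OF s x n2] card_level_eq_2[OF x n2] by blast
qed simp

section \<open>Counting the lines with four points\<close>

lemma card_pedal_xs_sum_levels: "card pedal_xs = (\<Sum>t\<in>subfield_q q. card (level t))"
proof -
  have U: "pedal_xs = (\<Union>t\<in>subfield_q q. level t)"
    by (auto simp: level_def mem_subfield_q_iff)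
  show ?thesis
    unfolding U by (rule card_UN_disjoint) (auto simp: level_def)
qed

lemma card_two_point_levels_le:
  assumes s: "s ^ 2 = \<alpha>"
  shows "card {t \<in> subfield_q q. card (level t) = 2} \<le> 2"
proof -
  have "{t \<in> subfield_q q. card (level t) = 2} \<subseteq> {t. disc * t ^ 2 = 16 * c ^ 2 * Norm \<alpha>}"
  proof
    fix t assume "t \<in> {t \<in> subfield_q q. card (level t) = 2}"
    then show "t \<in> {t. disc * t ^ 2 = 16 * c ^ 2 * Norm \<alpha>}"
      using card_level_cases[OF s, of t] by simp
  qed
  also have "\<dots> \<subseteq> {t. t ^ 2 = (16 * c ^ 2 * Norm \<alpha>) / disc}"
    using disc_neq_0 by (auto simp: field_simps)
  finally have "card {t \<in> subfield_q q. card (level t) = 2} \<le> card {t. t ^ 2 = (16 * c ^ 2 * Norm \<alpha>) / disc}"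
    by (rule card_mono[rotated]) simp
  also have "\<dots> \<le> 2"
    by (rule card_square_roots_le)
  finally show ?thesis .
qed

lemma four_point_levels_bound:
  assumes s: "s ^ 2 = \<alpha>"
  shows "q + 1 \<le> 4 * card {t \<in> subfield_q q. card (level t) = 4} + 4"
proof -
  define T4 where "T4 = {t \<in> subfield_q q. card (level t) = 4}"
  define T2 where "T2 = {t \<in> subfield_q q. card (level t) = 2}"
  have card_eq_sum: "card {t \<in> subfield_q q. P t} = (\<Sum>t\<in>subfield_q q. if P t then 1 else 0 :: nat)"
    for P :: "'a \<Rightarrow> bool"
    using sum.inter_filter[of "subfield_q q" "\<lambda>_. 1 :: nat" P] by simp
  have "card (level t) \<le> 4 * (if t \<in> T4 then 1 else 0) + 2 * (if t \<in> T2 then 1 else 0)"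
    if "t \<in> subfield_q q" for t
    using card_level_cases[OF s, of t] that by (auto simp: T4_def T2_def)
  then have "card pedal_xs \<le> (\<Sum>t\<in>subfield_q q. 4 * (if t \<in> T4 then 1 else 0) + 2 * (if t \<in> T2 then 1 else 0))"
    unfolding card_pedal_xs_sum_levels by (rule sum_mono)
  also have "\<dots> = 4 * card T4 + 2 * card T2"
    unfolding T4_def T2_def card_eq_sum by (simp add: sum.distrib sum_distrib_left)
  finally show ?thesis
    using card_pedal_xs card_two_point_levels_le[OF s] by (simp add: T4_def T2_def)
qed

lemma horizontal_inj: "inj horizontal"
proof (rule injI)
  fix t t' assume "horizontal t = horizontal t'"
  moreover have "pt (0, t - c, 1) \<in> horizontal t"
    by (simp add: horizontal_def pt_in_line_iff dot3_def)
  ultimately show "t = t'"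
    by (simp add: horizontal_def pt_in_line_iff dot3_def)
qed

lemma card_four_point_levels_le:
  "card {t \<in> subfield_q q. card (level t) = 4} \<le> card {l \<in> lines. card (l \<inter> pedal_pts) = 4}"
proof (rule card_inj_on_le)
  show "inj_on horizontal {t \<in> subfield_q q. card (level t) = 4}"
    by (rule inj_on_subset[OF horizontal_inj]) simp
  show "horizontal ` {t \<in> subfield_q q. card (level t) = 4} \<subseteq> {l \<in> lines. card (l \<inter> pedal_pts) = 4}"
    using horizontal_in_lines card_horizontal_inter_pedal by auto
qed simp

text \<open>For \<open>q = 3\<close> the count would leave room for no line with four points; but there
  \<open>\<bbbF>\<^sub>q = {0, 1, -1}\<close> forces \<open>disc = -1\<close>, \<open>Norm \<alpha> = 1\<close> and \<open>\<delta>\<^sup>2 \<in> {0, -1}\<close>.\<close>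

lemma q_neq_3_if_square:
  assumes s: "s ^ 2 = \<alpha>"
  shows "q \<noteq> 3"
proof
  assume q3: "q = 3"
  note F3 = fixed_cases_if_q_eq_3[OF q3]
  have "disc \<noteq> 1"
    using disc_nonsquare by (metis frob_1 power_one)
  then have "disc = -1"
    using F3[OF frob_disc] disc_neq_0 by simp
  moreover have "Norm \<alpha> = 1"
  proof -
    have "Norm s = 1 \<or> Norm s = -1"
      using F3[OF frob_Norm[of s]] s alpha_neq_0 by auto
    then show ?thesis
      using Norm_mult[of s s] s by (auto simp: power2_eq_square)
  qed
  moreover have "\<delta> ^ 2 = 0 \<or> \<delta> ^ 2 = -1"
  proof -
    have "frob (\<delta> / eps) = \<delta> / eps"
      by (simp add: frob_eps)
    then have "(\<delta> / eps) ^ 2 = 0 \<or> (\<delta> / eps) ^ 2 = 1"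
      using F3 by fastforce
    moreover have "\<delta> ^ 2 = (\<delta> / eps) ^ 2 * eps ^ 2"
      using eps_neq_0 by (simp add: power_divide)
    ultimately show ?thesis
      using eps_square_if_q_eq_3[OF q3] by auto
  qed
  moreover have "(4::'a) = 1"
  proof -
    have "(4::'a) = 3 + 1" by simp
    then show ?thesis using three_eq_0_if_q_eq_3[OF q3] by simp
  qed
  ultimately have "\<delta> ^ 2 + 1 = -1" "\<delta> ^ 2 = 0 \<or> \<delta> ^ 2 = -1"
    by (simp_all add: disc_def)
  then show False
    using one_neq_minus_one by auto
qed

lemma pedal_is_arc:
  assumes "\<not> (\<exists>s. s ^ 2 = \<alpha>)"
  shows "is_arc pedal_pts"
  unfolding is_arc_def
proof
  fix l :: "'a vec3 set set" assume "l \<in> lines"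
  then show "card (l \<inter> pedal_pts) \<le> 2"
  proof (rule line_inter_pedal_cases[THEN disjE])
    assume "\<exists>t. l = horizontal t"
    then obtain t where "l = horizontal t" ..
    then show ?thesis
      using card_horizontal_inter_pedal card_level_le_2[OF assms] by simp
  qed
qed

lemma four_point_line_through_U_inf:
  assumes "l \<in> lines" "card (l \<inter> pedal_pts) = 4"
  shows "pt (1, 0, 0) \<in> l"
proof -
  obtain t where "l = horizontal t"
    using line_inter_pedal_cases[OF assms(1)] assms(2) by auto
  then show ?thesis
    by (simp add: horizontal_def pt_in_line_iff dot3_def)
qed

lemma card_line_inter_pedal_values:
  assumes s: "s ^ 2 = \<alpha>" and l: "l \<in> lines"
  shows "card (l \<inter> pedal_pts) \<in> {0, 1, 2, 4}"
proof (rule line_inter_pedal_cases[OF l, THEN disjE])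
  assume "card (l \<inter> pedal_pts) \<le> 2"
  then show ?thesis
    unfolding insert_iff empty_iff by arith
next
  assume "\<exists>t. l = horizontal t"
  then obtain t where "l = horizontal t" ..
  then show ?thesis
    using card_horizontal_inter_pedal card_level_cases[OF s, of t] by auto
qed

lemma card_xs_on_line_attained:
  assumes L: "(a, b, z) \<noteq> (0, 0, 0)"
  shows "card (xs_on_line a b z) \<in> (\<lambda>l. card (l \<inter> pedal_pts)) ` lines"
proof (rule rev_image_eqI)
  show "line (a, b, z) \<in> lines"
    using L by (rule line_in_lines)
  show "card (xs_on_line a b z) = card (line (a, b, z) \<inter> pedal_pts)"
    using card_line_inter_pedal[OF L] by simp
qed

lemma q_ge_5_if_square:
  assumes "s ^ 2 = \<alpha>"
  shows "q \<ge> 5"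
  using q_ge_3 odd_q q_neq_3_if_square[OF assms] by presburger

lemma two_point_line_exists:
  assumes s: "s ^ 2 = \<alpha>" and x1: "x1 \<in> pedal_xs"
  shows "2 \<in> (\<lambda>l. card (l \<inter> pedal_pts)) ` lines"
proof -
  define t1 where "t1 = Tr (\<alpha> * x1 ^ 2)"
  have "card (level t1) \<le> 4"
    using card_level_cases[OF s, of t1] by auto
  then have "\<not> pedal_xs \<subseteq> level t1"
    using card_mono[OF finite, of pedal_xs "level t1"] card_pedal_xs q_ge_5_if_square[OF s]
    by linarith
  then obtain x2 where x2: "x2 \<in> pedal_xs" "x2 \<notin> level t1"
    by blast
  then have h: "pedal_y x1 - pedal_y x2 \<noteq> 0"
    by (simp add: level_def pedal_y_def t1_def)
  then have "x2 - x1 \<noteq> 0"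
    by auto
  define z where "z = x1 * pedal_y x2 - x2 * pedal_y x1"
  let ?S = "xs_on_line (pedal_y x1 - pedal_y x2) (x2 - x1) z"
  have "{x1, x2} \<subseteq> ?S"
    using x1 x2 by (auto simp: xs_on_line_def z_def algebra_simps)
  then have "card {x1, x2} \<le> card ?S"
    by (rule card_mono[OF finite])
  moreover have "card {x1, x2} = 2"
    using \<open>x2 - x1 \<noteq> 0\<close> by simp
  moreover have "card ?S \<le> 2"
    using card_xs_on_oblique_line_le h \<open>x2 - x1 \<noteq> 0\<close> by blast
  ultimately have "card ?S = 2"
    by linarith
  moreover have "card ?S \<in> (\<lambda>l. card (l \<inter> pedal_pts)) ` lines"
    by (rule card_xs_on_line_attained) (use h in simp)
  ultimately show ?thesis
    by simp
qed

lemma four_point_line_exists: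
  assumes s: "s ^ 2 = \<alpha>"
  shows "4 \<in> (\<lambda>l. card (l \<inter> pedal_pts)) ` lines"
proof -
  have "card {t \<in> subfield_q q. card (level t) = 4} \<noteq> 0"
    using four_point_levels_bound[OF s] q_ge_5_if_square[OF s] by linarith
  then obtain t where "card (level t) = 4"
    by (metis (mono_tags, lifting) card.empty empty_Collect_eq)
  show ?thesis
  proof (rule rev_image_eqI)
    show "horizontal t \<in> lines"
      by (rule horizontal_in_lines)
    show "4 = card (horizontal t \<inter> pedal_pts)"
      using card_horizontal_inter_pedal \<open>card (level t) = 4\<close> by simp
  qed
qed

lemma card_line_inter_pedal_values_attained:
  assumes s: "s ^ 2 = \<alpha>"
  shows "{0, 1, 2, 4} \<subseteq> (\<lambda>l. card (l \<inter> pedal_pts)) ` lines"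
proof -
  have "pedal_xs \<noteq> {}"
    using card_pedal_xs by auto
  then obtain x1 where x1: "x1 \<in> pedal_xs"
    by blast
  have "xs_on_line 0 0 1 = {}"
    by (simp add: xs_on_line_def)
  then have "0 \<in> (\<lambda>l. card (l \<inter> pedal_pts)) ` lines"
    using card_xs_on_line_attained[of 0 0 1] by simp
  moreover have "xs_on_line 1 0 (- x1) = {x1}"
    using x1 by (auto simp: xs_on_line_def)
  then have "1 \<in> (\<lambda>l. card (l \<inter> pedal_pts)) ` lines"
    using card_xs_on_line_attained[of 1 0 "- x1"] by simp
  ultimately show ?thesis
    using two_point_line_exists[OF s x1] four_point_line_exists[OF s] by blast
qed

lemma pedal_of_class:
  assumes "s ^ 2 = \<alpha>"
  shows "of_class pedal_pts {0, 1, 2, 4}"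
  unfolding of_class_def
proof (rule equalityI)
  show "(\<lambda>l. card (l \<inter> pedal_pts)) ` lines \<subseteq> {0, 1, 2, 4}"
    by (rule image_subsetI) (rule card_line_inter_pedal_values[OF assms])
qed (rule card_line_inter_pedal_values_attained[OF assms])

lemma card_four_point_lines_ge:
  assumes "s ^ 2 = \<alpha>"
  shows "real (card {l \<in> lines. card (l \<inter> pedal_pts) = 4}) \<ge> (real q - 3) / 4"
proof -
  have "q + 1 \<le> 4 * card {l \<in> lines. card (l \<inter> pedal_pts) = 4} + 4"
    using four_point_levels_bound[OF assms] card_four_point_levels_le by linarith
  then have "real q - 3 \<le> real (card {l \<in> lines. card (l \<inter> pedal_pts) = 4}) * 4"
    by linarith
  then show ?thesis
    by (simp add: pos_divide_le_eq)
qed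

end

theorem lemma2p7:
  fixes q :: nat and \<zeta> \<alpha> \<beta> :: "'a::{field,finite}"
  assumes card: "card (UNIV :: 'a set) = q ^ 2"
    and odd: "odd q"
    and prim: "primitive_elem \<zeta>"
    and a0: "\<alpha> \<noteq> 0"
    and nsq: "\<not> (\<exists>y \<in> subfield_q q. y ^ 2 = (\<beta> ^ q - \<beta>) ^ 2 + 4 * \<alpha> ^ (q + 1))"
  shows "let \<epsilon> = \<zeta> ^ ((q + 1) div 2); w = \<epsilon> ^ 2;
             R2 = pt (0, w * \<epsilon>, 1); Uinf = pt (1, 0, 0);
             P = pedal (unital_ab q \<alpha> \<beta>) R2
         in ((\<not> (\<exists>y. y ^ 2 = \<alpha>)) \<longrightarrow> is_arc P)
          \<and> ((\<exists>y. y ^ 2 = \<alpha>) \<longrightarrow>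
               of_class P {0, 1, 2, 4}
             \<and> real (card {l \<in> lines. card (l \<inter> P) = 4}) \<ge> (real q - 3) / 4
             \<and> (\<forall>l \<in> lines. card (l \<inter> P) = 4 \<longrightarrow> Uinf \<in> l))"
proof -
  interpret pedal_setup q \<zeta> \<alpha> \<beta>
    using card odd prim a0 nsq by unfold_locales
  have "pedal (unital_ab q \<alpha> \<beta>) (pt (0, (\<zeta> ^ ((q + 1) div 2)) ^ 2 * \<zeta> ^ ((q + 1) div 2), 1)) = pedal_pts"
    using pedal_eq by (simp add: c_def eps_def half_def)
  then show ?thesis
    unfolding Let_def
    using pedal_is_arc pedal_of_class card_four_point_lines_ge four_point_line_through_U_inf
    by auto
qed

end
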